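(* For any finite poset $P$ of dimension $2$, either $sat^*([k]^2,P)=O(1)$ or $sat^*([k]^2,P)=\Theta(k)$ (as $k\to\infty$).
   Context: $[k]^2$ is ordered coordinatewise. The dimension of a poset $P$ is the least $d$ such that there are $d$ linear orders (permutations) $\pi_1,\dots,\pi_d$ of $P$ with $p<_Pq$ iff $\pi_i(p)<\pi_i(q)$ for all $i$. For posets $P,R$, $P$ is a strong subposet of $R$ if there is an injection $i:P\to R$ with $p\le_P p'\iff i(p)\le_R i(p')$. A subset $F\subseteq Q$ is strong $P$-saturated if $P$ is not a strong subposet of $F$ but for every $x\in Q\setminus F$, $P$ is a strong subposet of $F\cup\{x\}$. $sat^*(Q,P)$ is the minimum size of a strong $P$-saturated subset of $Q$. *)

theory Defs
  imports Main "HOL-Library.Landau_Symbols"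
begin

definition finite_poset :: "'a set \<Rightarrow> ('a \<Rightarrow> 'a \<Rightarrow> bool) \<Rightarrow> bool" where
  "finite_poset P le \<longleftrightarrow> finite P
     \<and> (\<forall>p\<in>P. le p p)
     \<and> (\<forall>p\<in>P. \<forall>q\<in>P. le p q \<and> le q p \<longrightarrow> p = q)
     \<and> (\<forall>p\<in>P. \<forall>q\<in>P. \<forall>r\<in>P. le p q \<and> le q r \<longrightarrow> le p r)"

definition is_realizer :: "'a set \<Rightarrow> ('a \<Rightarrow> 'a \<Rightarrow> bool) \<Rightarrow> nat \<Rightarrow> (nat \<Rightarrow> 'a \<Rightarrow> nat) \<Rightarrow> bool" where
  "is_realizer P le d \<pi>s \<longleftrightarrow>
     (\<forall>i<d. bij_betw (\<pi>s i) P {0..<card P})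
     \<and> (\<forall>p\<in>P. \<forall>q\<in>P. (le p q \<and> p \<noteq> q) \<longleftrightarrow> (\<forall>i<d. \<pi>s i p < \<pi>s i q))"

definition poset_dim :: "'a set \<Rightarrow> ('a \<Rightarrow> 'a \<Rightarrow> bool) \<Rightarrow> nat" where
  "poset_dim P le = (LEAST d. \<exists>\<pi>s. is_realizer P le d \<pi>s)"

definition grid :: "nat \<Rightarrow> (nat \<times> nat) set" where
  "grid k = {1..k} \<times> {1..k}"

definition grid_le :: "nat \<times> nat \<Rightarrow> nat \<times> nat \<Rightarrow> bool" where
  "grid_le x y \<longleftrightarrow> fst x \<le> fst y \<and> snd x \<le> snd y"

definition strong_subposet :: "'a set \<Rightarrow> ('a \<Rightarrow> 'a \<Rightarrow> bool) \<Rightarrow> (nat \<times> nat) set \<Rightarrow> bool" where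
  "strong_subposet P le F \<longleftrightarrow>
     (\<exists>f. inj_on f P \<and> f ` P \<subseteq> F \<and>
          (\<forall>p\<in>P. \<forall>p'\<in>P. le p p' \<longleftrightarrow> grid_le (f p) (f p')))"

definition strong_saturated :: "(nat \<times> nat) set \<Rightarrow> 'a set \<Rightarrow> ('a \<Rightarrow> 'a \<Rightarrow> bool) \<Rightarrow> (nat \<times> nat) set \<Rightarrow> bool" where
  "strong_saturated Q P le F \<longleftrightarrow> F \<subseteq> Q \<and> \<not> strong_subposet P le F
     \<and> (\<forall>x\<in>Q - F. strong_subposet P le (insert x F))"

definition sat_star :: "nat \<Rightarrow> 'a set \<Rightarrow> ('a \<Rightarrow> 'a \<Rightarrow> bool) \<Rightarrow> nat" where
  "sat_star k P le = (LEAST n. \<exists>F. strong_saturated (grid k) P le F \<and> card F = n)"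

end

theory Submission
  imports Defs "HOL-Library.Infinite_Set" "HOL-Library.Product_Lexorder"
begin

text \<open>
  If \<open>(\<pi>\<^sub>0, \<pi>\<^sub>1)\<close> realizes \<open>P\<close>, then \<open>P\<close> is a strong subposet of every \<open>F \<subseteq> [k]\<^sup>2\<close>
  containing the permutation pattern \<open>{(\<pi>\<^sub>0 p, \<pi>\<^sub>1 p) | p \<in> P}\<close>. Hence a \<open>P\<close>-free family
  avoids this pattern and, by the Marcus--Tardos theorem, has \<open>O(k)\<close> points; in particular
  \<open>sat\<^sup>*([k]\<^sup>2, P) = O(k)\<close>.

  If some saturated \<open>F \<subseteq> [k\<^sub>0]\<^sup>2\<close> has fewer than \<open>k\<^sub>0\<close> points, it misses some row \<open>a\<close>
  and some column \<open>b\<close>. Blowing up row \<open>a\<close> and column \<open>b\<close> into \<open>m - k\<^sub>0 + 1\<close> copies each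
  turns \<open>F\<close> into a saturated family of the same size in \<open>[m]\<^sup>2\<close>: every new point relates to
  the stretched family exactly as a point of the empty row or column related to \<open>F\<close>. So
  \<open>sat\<^sup>*\<close> is eventually bounded. Otherwise \<open>sat\<^sup>*([k]\<^sup>2, P) \<ge> k\<close> for all \<open>k\<close>,
  and the linear upper bound gives \<open>\<Theta>(k)\<close>.
\<close>

section \<open>The Marcus--Tardos theorem\<close>

text \<open>Only strict inequalities between pattern coordinates have to be preserved; for the
  permutation patterns used below this is ordinary pattern containment.\<close>
definition contains_pattern :: "(nat \<times> nat) set \<Rightarrow> (nat \<times> nat) set \<Rightarrow> bool" where
  "contains_pattern F M \<longleftrightarrow> (\<exists>\<phi>. \<phi> ` M \<subseteq> F \<and> (\<forall>u\<in>M. \<forall>v\<in>M.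
     (fst u < fst v \<longrightarrow> fst (\<phi> u) < fst (\<phi> v)) \<and> (snd u < snd v \<longrightarrow> snd (\<phi> u) < snd (\<phi> v))))"

definition contract :: "nat \<Rightarrow> nat \<times> nat \<Rightarrow> nat \<times> nat" where
  "contract t p = (fst p div t, snd p div t)"

definition block :: "nat \<Rightarrow> (nat \<times> nat) set \<Rightarrow> nat \<times> nat \<Rightarrow> (nat \<times> nat) set" where
  "block t F b = {p \<in> F. contract t p = b}"

lemma contains_pattern_swap:
  assumes "contains_pattern F M"
  shows "contains_pattern (prod.swap ` F) (prod.swap ` M)"
proof -
  obtain \<phi> where \<phi>: "\<phi> ` M \<subseteq> F" and mono: "\<forall>u\<in>M. \<forall>v\<in>M.
      (fst u < fst v \<longrightarrow> fst (\<phi> u) < fst (\<phi> v)) \<and> (snd u < snd v \<longrightarrow> snd (\<phi> u) < snd (\<phi> v))"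
    using assms unfolding contains_pattern_def by blast
  show ?thesis
    unfolding contains_pattern_def
    by (rule exI[of _ "prod.swap \<circ> \<phi> \<circ> prod.swap"]) (use \<phi> mono in \<open>auto simp: image_image\<close>)
qed

lemma contains_pattern_contract:
  assumes "contains_pattern (contract t ` F) M"
  shows "contains_pattern F M"
proof -
  obtain \<phi> where \<phi>: "\<phi> ` M \<subseteq> contract t ` F" and mono: "\<forall>u\<in>M. \<forall>v\<in>M.
      (fst u < fst v \<longrightarrow> fst (\<phi> u) < fst (\<phi> v)) \<and> (snd u < snd v \<longrightarrow> snd (\<phi> u) < snd (\<phi> v))"
    using assms unfolding contains_pattern_def by blast
  have "\<forall>u\<in>M. \<exists>p. p \<in> F \<and> contract t p = \<phi> u"
    using \<phi> unfolding image_subset_iff by (metis imageE)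
  from bchoice[OF this] obtain \<psi> where \<psi>: "\<forall>u\<in>M. \<psi> u \<in> F \<and> contract t (\<psi> u) = \<phi> u"
    ..
  have div_less: "x < y" if "x div t < y div t" for x y :: nat
    using div_le_mono[of y x t] that by linarith
  have coords: "fst (\<psi> u) div t = fst (\<phi> u) \<and> snd (\<psi> u) div t = snd (\<phi> u)" if "u \<in> M" for u
    using \<psi> that unfolding contract_def by (metis fst_conv snd_conv)
  show ?thesis
    unfolding contains_pattern_def
  proof (intro exI[of _ \<psi>] conjI ballI impI)
    show "\<psi> ` M \<subseteq> F" using \<psi> by blast
  next
    fix u v assume "u \<in> M" "v \<in> M" "fst u < fst v"
    then show "fst (\<psi> u) < fst (\<psi> v)"
      using mono coords by (metis div_less)
  next
    fix u v assume "u \<in> M" "v \<in> M" "snd u < snd v"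
    then show "snd (\<psi> u) < snd (\<psi> v)"
      using mono coords by (metis div_less)
  qed
qed

lemma block_subset:
  assumes "0 < t"
  shows "block t F (i, j) \<subseteq> {t * i..<t * i + t} \<times> {t * j..<t * j + t}"
proof
  fix p assume "p \<in> block t F (i, j)"
  then have "fst p div t = i" "snd p div t = j"
    unfolding block_def contract_def by auto
  moreover have "t * (x div t) \<le> x \<and> x < t * (x div t) + t" for x
    using times_div_less_eq_dividend[of t x] dividend_less_times_div[OF assms, of x] by simp
  ultimately show "p \<in> {t * i..<t * i + t} \<times> {t * j..<t * j + t}"
    by (cases p) (metis atLeastLessThan_iff mem_Times_iff fst_conv snd_conv)
qed

lemma card_eq_sum_card_block:
  assumes "finite F"
  shows "card F = (\<Sum>b\<in>contract t ` F. card (block t F b))"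
  unfolding block_def card_eq_sum by (rule sum.image_gen[OF assms])

lemma card_le_card_image_mult:
  assumes "finite A" and "\<And>y. y \<in> f ` A \<Longrightarrow> card {x \<in> A. f x = y} \<le> K"
  shows "card A \<le> card (f ` A) * K"
proof -
  have "card A = (\<Sum>y\<in>f ` A. card {x \<in> A. f x = y})"
    unfolding card_eq_sum by (rule sum.image_gen[OF assms(1)])
  also have "\<dots> \<le> card (f ` A) * K"
    using assms(2) by (rule sum_bounded_above[where K = K, simplified])
  finally show ?thesis .
qed

lemma card_le_mult_if_card_rows_le:
  assumes "finite A" and "snd ` A \<subseteq> {..<m}" and "\<And>j. card {i. (i, j) \<in> A} \<le> K"
  shows "card A \<le> m * K"
proof -
  have "card {x \<in> A. snd x = j} \<le> K" for j
  proof -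
    have "{x \<in> A. snd x = j} = (\<lambda>i. (i, j)) ` {i. (i, j) \<in> A}" by force
    then show ?thesis using assms(3)[of j] by (simp add: card_image inj_on_def)
  qed
  then have "card A \<le> card (snd ` A) * K"
    by (intro card_le_card_image_mult[OF assms(1)])
  also have "\<dots> \<le> m * K"
    using card_mono[OF _ assms(2)] by simp
  finally show ?thesis .
qed

lemma contains_pattern_if_common_columns:
  assumes M: "M \<subseteq> {..<n} \<times> {..<n}"
    and I: "finite I" "card I = n" and S: "finite S" "card S = n"
    and common: "\<And>i. i \<in> I \<Longrightarrow> S \<subseteq> snd ` block t F (i, j)"
  shows "contains_pattern F M"
proof -
  have "\<forall>u\<in>M. \<exists>p. p \<in> block t F (enumerate I (fst u), j) \<and> snd p = enumerate S (snd u)"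
  proof
    fix u assume "u \<in> M"
    then have "fst u < card I" "snd u < card S"
      using M I S by auto
    then have "enumerate I (fst u) \<in> I" "enumerate S (snd u) \<in> S"
      using I(1) S(1) by (simp_all add: finite_enumerate_in_set)
    then have "enumerate S (snd u) \<in> snd ` block t F (enumerate I (fst u), j)"
      using common by blast
    then show "\<exists>p. p \<in> block t F (enumerate I (fst u), j) \<and> snd p = enumerate S (snd u)"
      by force
  qed
  from bchoice[OF this] obtain \<phi>
    where \<phi>: "\<forall>u\<in>M. \<phi> u \<in> block t F (enumerate I (fst u), j) \<and> snd (\<phi> u) = enumerate S (snd u)"
    ..
  show ?thesis
    unfolding contains_pattern_def
  proof (intro exI[of _ \<phi>] conjI ballI impI)
    show "\<phi> ` M \<subseteq> F" using \<phi> unfolding block_def by blast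
  next
    fix u v assume uv: "u \<in> M" "v \<in> M" "fst u < fst v"
    then have "enumerate I (fst u) < enumerate I (fst v)"
      using M I by (auto intro: finite_enumerate_mono)
    moreover have "fst (\<phi> w) div t = enumerate I (fst w)" if "w \<in> M" for w
      using \<phi> that unfolding block_def contract_def by auto
    ultimately have "fst (\<phi> u) div t < fst (\<phi> v) div t" using uv by simp
    then show "fst (\<phi> u) < fst (\<phi> v)"
      using div_le_mono[of "fst (\<phi> v)" "fst (\<phi> u)" t] by linarith
  next
    fix u v assume "u \<in> M" "v \<in> M" "snd u < snd v"
    then show "snd (\<phi> u) < snd (\<phi> v)"
      using \<phi> M S by (auto intro: finite_enumerate_mono)
  qed
qed

text \<open>Pigeonhole over the \<open>n\<close>-subsets of the \<open>t\<close> second coordinates of a row of blocks: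
  \<open>n\<close> wide blocks with the same \<open>n\<close>-set of second coordinates contain every \<open>n \<times> n\<close> pattern.\<close>
lemma card_wide_blocks_in_row_le:
  assumes M: "M \<subseteq> {..<n} \<times> {..<n}" and avoid: "\<not> contains_pattern F M" and t: "0 < t"
    and W: "W \<subseteq> {i. n \<le> card (snd ` block t F (i, j))}"
  shows "card W \<le> (n - 1) * (t choose n)"
proof (rule ccontr)
  assume "\<not> ?thesis"
  then have big: "(t choose n) * (n - 1) < card W" by (simp add: mult.commute)
  then have "finite W" using card.infinite by fastforce
  have columns: "snd ` block t F (i, j) \<subseteq> {t * j..<t * j + t}" for i
    using block_subset[OF t] by fastforce
  have "\<forall>i\<in>W. \<exists>S. S \<subseteq> snd ` block t F (i, j) \<and> card S = n"
    using W by (blast intro: obtain_subset_with_card_n)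
  from bchoice[OF this] obtain g where g: "\<forall>i\<in>W. g i \<subseteq> snd ` block t F (i, j) \<and> card (g i) = n"
    ..
  have "g ` W \<subseteq> {S. S \<subseteq> {t * j..<t * j + t} \<and> card S = n}"
    using g columns by blast
  then have "card (g ` W) \<le> t choose n"
    using card_mono[of "{S. S \<subseteq> {t * j..<t * j + t} \<and> card S = n}"] by (simp add: n_subsets)
  have "\<not> (\<forall>S\<in>g ` W. card {i \<in> W. g i = S} \<le> n - 1)"
  proof
    assume "\<forall>S\<in>g ` W. card {i \<in> W. g i = S} \<le> n - 1"
    then have "card W \<le> card (g ` W) * (n - 1)"
      by (intro card_le_card_image_mult[OF \<open>finite W\<close>]) blast
    also have "\<dots> \<le> (t choose n) * (n - 1)"
      using \<open>card (g ` W) \<le> t choose n\<close> by simp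
    finally show False using big by simp
  qed
  then obtain i0 where "i0 \<in> W" and "n - 1 < card {i \<in> W. g i = g i0}"
    by (auto simp: not_le)
  then have "n \<le> card {i \<in> W. g i = g i0}" by linarith
  then obtain I where I: "I \<subseteq> {i \<in> W. g i = g i0}" "card I = n"
    by (rule obtain_subset_with_card_n)
  have "contains_pattern F M"
  proof (rule contains_pattern_if_common_columns[OF M _ I(2)])
    have "I \<subseteq> W" using I(1) by blast
    then show "finite I" using \<open>finite W\<close> by (rule finite_subset)
    have "g i0 \<subseteq> {t * j..<t * j + t}" using g \<open>i0 \<in> W\<close> columns by blast
    then show "finite (g i0)" by (rule finite_subset) simp
    show "card (g i0) = n" using g \<open>i0 \<in> W\<close> by blast
    show "g i0 \<subseteq> snd ` block t F (i, j)" if "i \<in> I" for i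
      using g I(1) that by (metis (mono_tags, lifting) mem_Collect_eq subsetD)
  qed
  with avoid show False by contradiction
qed

lemma card_wide_blocks_le:
  assumes M: "M \<subseteq> {..<n} \<times> {..<n}" and avoid: "\<not> contains_pattern F M" and t: "0 < t"
    and F: "F \<subseteq> {..<t * m} \<times> {..<t * m}"
  shows "card {b \<in> contract t ` F. n \<le> card (snd ` block t F b)} \<le> m * ((n - 1) * (t choose n))"
proof (rule card_le_mult_if_card_rows_le)
  show "finite {b \<in> contract t ` F. n \<le> card (snd ` block t F b)}"
    using finite_subset[OF F] by simp
  show "snd ` {b \<in> contract t ` F. n \<le> card (snd ` block t F b)} \<subseteq> {..<m}"
    using F by (auto simp: contract_def less_mult_imp_div_less mult.commute)
  show "card {i. (i, j) \<in> {b \<in> contract t ` F. n \<le> card (snd ` block t F b)}}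
      \<le> (n - 1) * (t choose n)" for j
    by (rule card_wide_blocks_in_row_le[OF M avoid t]) blast
qed

lemma block_swap: "block t (prod.swap ` F) (prod.swap b) = prod.swap ` block t F b"
  unfolding block_def contract_def by (cases b) (auto simp: image_iff)

lemma card_tall_blocks_le:
  assumes M: "M \<subseteq> {..<n} \<times> {..<n}" and avoid: "\<not> contains_pattern F M" and t: "0 < t"
    and F: "F \<subseteq> {..<t * m} \<times> {..<t * m}"
  shows "card {b \<in> contract t ` F. n \<le> card (fst ` block t F b)} \<le> m * ((n - 1) * (t choose n))"
proof -
  have avoid': "\<not> contains_pattern (prod.swap ` F) (prod.swap ` M)"
  proof
    assume "contains_pattern (prod.swap ` F) (prod.swap ` M)"
    then have "contains_pattern (prod.swap ` prod.swap ` F) (prod.swap ` prod.swap ` M)"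
      by (rule contains_pattern_swap)
    with avoid show False by (simp add: image_image)
  qed
  have M': "prod.swap ` M \<subseteq> {..<n} \<times> {..<n}" and F': "prod.swap ` F \<subseteq> {..<t * m} \<times> {..<t * m}"
    using M F by auto
  have "card {b \<in> contract t ` prod.swap ` F. n \<le> card (snd ` block t (prod.swap ` F) b)}
      \<le> m * ((n - 1) * (t choose n))"
    by (rule card_wide_blocks_le[OF M' avoid' t F'])
  moreover have "contract t ` prod.swap ` F = prod.swap ` contract t ` F"
    unfolding image_image by (rule image_cong) (auto simp: contract_def)
  moreover have "snd ` block t (prod.swap ` F) b = fst ` block t F (prod.swap b)" for b
    using block_swap[of t F "prod.swap b"] by (simp add: image_image)
  ultimately have "card {b \<in> prod.swap ` contract t ` F. n \<le> card (fst ` block t F (prod.swap b))}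
      \<le> m * ((n - 1) * (t choose n))"
    by simp
  moreover have "{b \<in> prod.swap ` contract t ` F. n \<le> card (fst ` block t F (prod.swap b))}
      = prod.swap ` {b \<in> contract t ` F. n \<le> card (fst ` block t F b)}"
    by auto
  ultimately show ?thesis by (simp add: card_image)
qed

lemma card_le_card_contract:
  assumes M: "M \<subseteq> {..<n} \<times> {..<n}" and avoid: "\<not> contains_pattern F M" and t: "0 < t"
    and F: "F \<subseteq> {..<t * m} \<times> {..<t * m}"
  shows "card F \<le> (n - 1) * (n - 1) * card (contract t ` F)
    + 2 * (t * t * (m * ((n - 1) * (t choose n))))"
proof -
  define wide where "wide b \<longleftrightarrow> n \<le> card (snd ` block t F b)" for b
  define tall where "tall b \<longleftrightarrow> n \<le> card (fst ` block t F b)" for b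
  have "finite F" using F finite_subset by blast
  have block_le: "card (block t F b)
      \<le> (n - 1) * (n - 1) + (if wide b then t * t else 0) + (if tall b then t * t else 0)" for b
  proof (cases "wide b \<or> tall b")
    case True
    obtain i j where "b = (i, j)" by force
    then have "card (block t F b) \<le> t * t"
      using card_mono[OF _ block_subset[OF t]] by (simp add: card_cartesian_product)
    with True show ?thesis by auto
  next
    case False
    have "finite (block t F b)" using \<open>finite F\<close> unfolding block_def by simp
    moreover have "block t F b \<subseteq> fst ` block t F b \<times> snd ` block t F b" by force
    ultimately have "card (block t F b) \<le> card (fst ` block t F b) * card (snd ` block t F b)"
      using card_mono[of "fst ` block t F b \<times> snd ` block t F b"] by (simp add: card_cartesian_product)
    also have "\<dots> \<le> (n - 1) * (n - 1)"
      using False unfolding wide_def tall_def by (intro mult_le_mono) auto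
    finally show ?thesis by simp
  qed
  have "card F = (\<Sum>b\<in>contract t ` F. card (block t F b))"
    by (rule card_eq_sum_card_block[OF \<open>finite F\<close>])
  also have "\<dots> \<le> (\<Sum>b\<in>contract t ` F.
      (n - 1) * (n - 1) + (if wide b then t * t else 0) + (if tall b then t * t else 0))"
    by (rule sum_mono) (rule block_le)
  also have "\<dots> = (n - 1) * (n - 1) * card (contract t ` F)
      + t * t * card {b \<in> contract t ` F. wide b} + t * t * card {b \<in> contract t ` F. tall b}"
    using \<open>finite F\<close> by (simp add: sum.distrib flip: sum.inter_filter)
  also have "\<dots> \<le> (n - 1) * (n - 1) * card (contract t ` F)
      + t * t * (m * ((n - 1) * (t choose n))) + t * t * (m * ((n - 1) * (t choose n)))"
    using card_wide_blocks_le[OF M avoid t F] card_tall_blocks_le[OF M avoid t F]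
    unfolding wide_def tall_def by (intro add_mono mult_le_mono2 order.refl)
  finally show ?thesis by simp
qed

lemma card_pattern_avoiding_le_power:
  assumes M: "M \<subseteq> {..<n} \<times> {..<n}" and "0 < n" and t: "t = n * n + 1"
    and "\<not> contains_pattern F M" and "F \<subseteq> {..<t ^ k} \<times> {..<t ^ k}"
  shows "card F \<le> t * t * (t choose n) * t ^ k"
  using assms(4,5)
proof (induction k arbitrary: F)
  case 0
  then have "F \<subseteq> {(0, 0)}" by auto
  then have "card F \<le> 1" using card_mono[of "{(0, 0)}"] by simp
  moreover have "0 < t choose n" using t le_square[of n] by (intro zero_less_binomial) linarith
  then have "0 < t * t * (t choose n)" using t by simp
  ultimately have "card F \<le> t * t * (t choose n)" by linarith
  then show ?case by simp
next
  case (Suc k)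
  define B where "B = contract t ` F"
  have "0 < t" using t by simp
  have "\<not> contains_pattern B M"
    using Suc.prems(1) contains_pattern_contract unfolding B_def by blast
  moreover have "B \<subseteq> {..<t ^ k} \<times> {..<t ^ k}"
    using Suc.prems(2) unfolding B_def contract_def
    by (auto simp: less_mult_imp_div_less mult.commute)
  ultimately have B: "card B \<le> t * t * (t choose n) * t ^ k"
    by (rule Suc.IH)
  have F: "F \<subseteq> {..<t * t ^ k} \<times> {..<t * t ^ k}" using Suc.prems(2) by simp
  have "card F \<le> (n - 1) * (n - 1) * card B + 2 * (t * t * (t ^ k * ((n - 1) * (t choose n))))"
    unfolding B_def by (rule card_le_card_contract[OF M Suc.prems(1) \<open>0 < t\<close> F])
  also have "\<dots> \<le> (n - 1) * (n - 1) * (t * t * (t choose n) * t ^ k)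
      + 2 * (t * t * (t ^ k * ((n - 1) * (t choose n))))"
    using B by simp
  also have "\<dots> = t * t * (t choose n) * t ^ k * ((n - 1) * (n - 1) + 2 * (n - 1))"
    by (simp add: algebra_simps)
  also have "(n - 1) * (n - 1) + 2 * (n - 1) \<le> t"
    \<comment> \<open>this is where the block size \<open>t = n\<^sup>2 + 1\<close> is needed\<close>
    using \<open>0 < n\<close> t by (cases n) (simp_all add: algebra_simps)
  finally show ?case by (simp add: mult_le_mono2 algebra_simps)
qed

theorem marcus_tardos:
  assumes M: "M \<subseteq> {..<n} \<times> {..<n}"
  shows "\<exists>C. \<forall>K F. F \<subseteq> {..<K} \<times> {..<K} \<longrightarrow> \<not> contains_pattern F M \<longrightarrow> card F \<le> C * K"
proof (cases "n = 0")
  case True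
  then have "contains_pattern F M" for F
    using M unfolding contains_pattern_def by simp
  then show ?thesis by blast
next
  case False
  define t where "t = n * n + 1"
  have "2 \<le> t" using False unfolding t_def by (simp add: le_square)
  have "card F \<le> (t * t * (t choose n) * t) * K"
    if F: "F \<subseteq> {..<K} \<times> {..<K}" and avoid: "\<not> contains_pattern F M" for K F
  proof (cases "K = 0")
    case True
    then show ?thesis using F by simp
  next
    case False
    then obtain k where k: "t ^ k \<le> K" "K < t ^ (k + 1)"
      using ex_power_ivl1[OF \<open>2 \<le> t\<close>, of K] by auto
    then have "F \<subseteq> {..<t ^ (k + 1)} \<times> {..<t ^ (k + 1)}"
      using F by fastforce
    then have "card F \<le> t * t * (t choose n) * t ^ (k + 1)"
      using card_pattern_avoiding_le_power[OF M _ t_def avoid] \<open>n \<noteq> 0\<close> by blast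
    also have "\<dots> \<le> (t * t * (t choose n) * t) * K"
      using k(1) by simp
    finally show ?thesis .
  qed
  then show ?thesis by blast
qed

section \<open>Realizers\<close>

definition rank :: "'a set \<Rightarrow> ('a \<Rightarrow> 'b::linorder) \<Rightarrow> 'a \<Rightarrow> nat" where
  "rank P key p = card {q \<in> P. key q < key p}"

lemma rank_less:
  assumes "finite P" "p \<in> P" "q \<in> P" "key p < key q"
  shows "rank P key p < rank P key q"
proof -
  have "{r \<in> P. key r < key p} \<subseteq> {r \<in> P. key r < key q}"
    using assms(4) by auto
  moreover have "p \<in> {r \<in> P. key r < key q} - {r \<in> P. key r < key p}"
    using assms(2,4) by simp
  ultimately show ?thesis
    unfolding rank_def using assms(1) by (intro psubset_card_mono) auto
qed

lemma bij_betw_rank: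
  assumes "finite P" and "inj_on key P"
  shows "bij_betw (rank P key) P {0..<card P}"
proof -
  have "inj_on (rank P key) P"
  proof (rule inj_onI)
    fix p q assume pq: "p \<in> P" "q \<in> P" and "rank P key p = rank P key q"
    then have "\<not> key p < key q" "\<not> key q < key p"
      using rank_less[where key = key, OF assms(1) pq] rank_less[where key = key, OF assms(1) pq(2,1)]
      by auto
    then show "p = q"
      using inj_onD[OF assms(2) _ pq] by fastforce
  qed
  moreover have "rank P key p < card P" if "p \<in> P" for p
    unfolding rank_def using assms(1) that by (intro psubset_card_mono) auto
  then have "rank P key ` P \<subseteq> {0..<card P}" by auto
  moreover have "card (rank P key ` P) = card {0..<card P}"
    using card_image[OF \<open>inj_on (rank P key) P\<close>] by simp
  ultimately show ?thesis
    unfolding bij_betw_def using card_subset_eq[of "{0..<card P}"] by simp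
qed

lemma ex_linear_extension_downset_first:
  assumes "finite_poset P le" and "y \<in> P"
  shows "\<exists>L. bij_betw L P {0..<card P}
    \<and> (\<forall>p\<in>P. \<forall>q\<in>P. le p q \<and> p \<noteq> q \<longrightarrow> L p < L q) \<and> (\<forall>p\<in>P. \<not> le p y \<longrightarrow> L y < L p)"
proof -
  have fin: "finite P" and refl: "\<And>p. p \<in> P \<Longrightarrow> le p p"
    and antisym: "\<And>p q. p \<in> P \<Longrightarrow> q \<in> P \<Longrightarrow> le p q \<Longrightarrow> le q p \<Longrightarrow> p = q"
    and trans: "\<And>p q r. p \<in> P \<Longrightarrow> q \<in> P \<Longrightarrow> r \<in> P \<Longrightarrow> le p q \<Longrightarrow> le q r \<Longrightarrow> le p r"
    using assms(1) unfolding finite_poset_def by blast+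
  obtain e :: "'a \<Rightarrow> nat" where e: "inj_on e P"
    using finite_imp_inj_to_nat_seg[OF fin] by blast
  define height where "height p = card {q \<in> P. le q p}" for p
  define key where "key p = (\<not> le p y, height p, e p)" for p
    \<comment> \<open>lexicographic: the down-set of \<open>y\<close> first, \<open>height\<close> makes it a linear extension\<close>
  have "inj_on key P"
    using e unfolding key_def inj_on_def by auto
  have height_less: "height p < height q" if "p \<in> P" "q \<in> P" "le p q" "p \<noteq> q" for p q
  proof -
    have "{r \<in> P. le r p} \<subseteq> {r \<in> P. le r q}" using trans that by blast
    moreover have "q \<in> {r \<in> P. le r q} - {r \<in> P. le r p}" using refl antisym that by blast
    ultimately show ?thesis
      unfolding height_def using fin by (intro psubset_card_mono) auto
  qed
  have "rank P key p < rank P key q" if "p \<in> P" "q \<in> P" "le p q" "p \<noteq> q" for p q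
    using height_less[OF that] trans[OF that(1,2) assms(2) that(3)]
    by (intro rank_less[OF fin that(1,2)]) (auto simp: key_def less_prod_def)
  moreover have "rank P key y < rank P key p" if "p \<in> P" "\<not> le p y" for p
    using that refl[OF assms(2)]
    by (intro rank_less[OF fin assms(2) that(1)]) (simp add: key_def less_prod_def)
  ultimately show ?thesis
    using bij_betw_rank[OF fin \<open>inj_on key P\<close>] by blast
qed

text \<open>The extensions \<open>L\<^sub>y\<close> for \<open>y \<in> P\<close> realize the order: if \<open>p\<close> precedes \<open>q\<close> in all of
  them, then in particular in \<open>L\<^sub>q\<close>, which forces \<open>p \<le> q\<close>.\<close>
lemma ex_realizer:
  assumes "finite_poset P le"
  shows "\<exists>d \<pi>s. is_realizer P le d \<pi>s"
proof -
  have "\<forall>y\<in>P. \<exists>L. bij_betw L P {0..<card P}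
      \<and> (\<forall>p\<in>P. \<forall>q\<in>P. le p q \<and> p \<noteq> q \<longrightarrow> L p < L q) \<and> (\<forall>p\<in>P. \<not> le p y \<longrightarrow> L y < L p)"
    using ex_linear_extension_downset_first[OF assms] by blast
  from bchoice[OF this] obtain L where L: "\<forall>y\<in>P. bij_betw (L y) P {0..<card P}
      \<and> (\<forall>p\<in>P. \<forall>q\<in>P. le p q \<and> p \<noteq> q \<longrightarrow> L y p < L y q) \<and> (\<forall>p\<in>P. \<not> le p y \<longrightarrow> L y y < L y p)"
    ..
  have "finite P" using assms unfolding finite_poset_def by blast
  then obtain h where h: "bij_betw h {0..<card P} P"
    using ex_bij_betw_nat_finite by blast
  have h_in: "h i \<in> P" if "i < card P" for i
    using h that by (auto dest: bij_betwE)
  have "is_realizer P le (card P) (\<lambda>i. L (h i))"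
    unfolding is_realizer_def
  proof (intro conjI allI impI ballI)
    fix i assume "i < card P"
    then show "bij_betw (L (h i)) P {0..<card P}" using L h_in by blast
  next
    fix p q assume pq: "p \<in> P" "q \<in> P"
    show "(le p q \<and> p \<noteq> q) \<longleftrightarrow> (\<forall>i<card P. L (h i) p < L (h i) q)"
    proof
      assume "le p q \<and> p \<noteq> q"
      then show "\<forall>i<card P. L (h i) p < L (h i) q"
        using L pq h_in by blast
    next
      assume "\<forall>i<card P. L (h i) p < L (h i) q"
      moreover obtain i where "i < card P" "h i = q"
        using h pq(2) by (metis atLeastLessThan_iff bij_betw_iff_bijections)
      ultimately have "L q p < L q q" by blast
      then show "le p q \<and> p \<noteq> q"
        using L pq by fastforce
    qed
  qed
  then show ?thesis by blast
qed

lemma poset_dim_realizer: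
  assumes "finite_poset P le"
  shows "\<exists>\<pi>s. is_realizer P le (poset_dim P le) \<pi>s"
  using ex_realizer[OF assms] unfolding poset_dim_def by (rule LeastI_ex)

lemma poset_dim_empty: "poset_dim {} le = 0"
  unfolding poset_dim_def is_realizer_def by (rule Least_eq_0) simp

lemma realizer_2_less_iff:
  assumes "is_realizer P le 2 \<pi>s" "p \<in> P" "q \<in> P"
  shows "le p q \<and> p \<noteq> q \<longleftrightarrow> \<pi>s 0 p < \<pi>s 0 q \<and> \<pi>s 1 p < \<pi>s 1 q"
  using assms unfolding is_realizer_def by (auto simp: less_2_cases_iff)

lemma le_iff_less_if_preserves_less:
  fixes c :: "'a \<Rightarrow> 'b::linorder" and g :: "'a \<Rightarrow> 'c::linorder"
  assumes "\<And>p q. p \<in> P \<Longrightarrow> q \<in> P \<Longrightarrow> c p < c q \<Longrightarrow> g p < g q"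
    and "p \<in> P" "q \<in> P" "c p \<noteq> c q"
  shows "g p \<le> g q \<longleftrightarrow> c p < c q"
  using assms(1)[OF assms(2,3)] assms(1)[OF assms(3,2)] assms(4) by fastforce

definition realizer_pattern :: "(nat \<Rightarrow> 'a \<Rightarrow> nat) \<Rightarrow> 'a set \<Rightarrow> (nat \<times> nat) set" where
  "realizer_pattern \<pi>s P = (\<lambda>p. (\<pi>s 0 p, \<pi>s 1 p)) ` P"

lemma strong_subposet_if_contains_realizer_pattern:
  assumes po: "finite_poset P le" and R: "is_realizer P le 2 \<pi>s"
    and "contains_pattern F (realizer_pattern \<pi>s P)"
  shows "strong_subposet P le F"
proof -
  obtain \<phi> where \<phi>: "\<phi> ` realizer_pattern \<pi>s P \<subseteq> F"
    and mono: "\<forall>u\<in>realizer_pattern \<pi>s P. \<forall>v\<in>realizer_pattern \<pi>s P.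
      (fst u < fst v \<longrightarrow> fst (\<phi> u) < fst (\<phi> v)) \<and> (snd u < snd v \<longrightarrow> snd (\<phi> u) < snd (\<phi> v))"
    using assms(3) unfolding contains_pattern_def by blast
  define f where "f p = \<phi> (\<pi>s 0 p, \<pi>s 1 p)" for p
  have pattern_point: "(\<pi>s 0 p, \<pi>s 1 p) \<in> realizer_pattern \<pi>s P" if "p \<in> P" for p
    using that unfolding realizer_pattern_def by blast
  have mono_f: "\<pi>s 0 p < \<pi>s 0 q \<Longrightarrow> fst (f p) < fst (f q)" "\<pi>s 1 p < \<pi>s 1 q \<Longrightarrow> snd (f p) < snd (f q)"
    if "p \<in> P" "q \<in> P" for p q
    using mono[rule_format, OF pattern_point[OF that(1)] pattern_point[OF that(2)]]
    unfolding f_def by simp_all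
  have grid_le_iff: "grid_le (f p) (f q) \<longleftrightarrow> \<pi>s 0 p < \<pi>s 0 q \<and> \<pi>s 1 p < \<pi>s 1 q"
    if "p \<in> P" "q \<in> P" "p \<noteq> q" for p q
  proof -
    have "inj_on (\<pi>s 0) P" "inj_on (\<pi>s 1) P"
      using R unfolding is_realizer_def bij_betw_def by auto
    then have "\<pi>s 0 p \<noteq> \<pi>s 0 q" "\<pi>s 1 p \<noteq> \<pi>s 1 q"
      using that unfolding inj_on_def by blast+
    then show ?thesis
      unfolding grid_le_def
      using le_iff_less_if_preserves_less[of P "\<pi>s 0" "\<lambda>p. fst (f p)", OF mono_f(1) that(1,2)]
        le_iff_less_if_preserves_less[of P "\<pi>s 1" "\<lambda>p. snd (f p)", OF mono_f(2) that(1,2)]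
      by blast
  qed
  show ?thesis
    unfolding strong_subposet_def
  proof (intro exI[of _ f] conjI ballI)
    show "inj_on f P"
    proof (rule inj_onI)
      fix p q assume "p \<in> P" "q \<in> P" "f p = f q"
      then show "p = q"
        using grid_le_iff[of p q] grid_le_iff[of q p] unfolding grid_le_def by fastforce
    qed
    show "f ` P \<subseteq> F" using \<phi> pattern_point unfolding f_def by blast
    fix p q assume pq: "p \<in> P" "q \<in> P"
    show "le p q \<longleftrightarrow> grid_le (f p) (f q)"
    proof (cases "p = q")
      case True
      moreover have "le p p" using po pq unfolding finite_poset_def by blast
      ultimately show ?thesis unfolding grid_le_def by simp
    next
      case False
      then show ?thesis using grid_le_iff[OF pq False] realizer_2_less_iff[OF R pq] by simp
    qed
  qed
qed

lemma card_le_linear_if_not_strong_subposet: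
  assumes po: "finite_poset P le" and R: "is_realizer P le 2 \<pi>s"
  shows "\<exists>C. \<forall>k F. F \<subseteq> grid k \<longrightarrow> \<not> strong_subposet P le F \<longrightarrow> card F \<le> C * (k + 1)"
proof -
  have "bij_betw (\<pi>s 0) P {0..<card P}" "bij_betw (\<pi>s 1) P {0..<card P}"
    using R unfolding is_realizer_def by auto
  then have "realizer_pattern \<pi>s P \<subseteq> {..<card P} \<times> {..<card P}"
    unfolding realizer_pattern_def by (auto dest: bij_betwE)
  then obtain C where C: "\<And>K F. F \<subseteq> {..<K} \<times> {..<K}
      \<Longrightarrow> \<not> contains_pattern F (realizer_pattern \<pi>s P) \<Longrightarrow> card F \<le> C * K"
    using marcus_tardos by blast
  have "card F \<le> C * (k + 1)" if "F \<subseteq> grid k" "\<not> strong_subposet P le F" for k F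
  proof (rule C)
    show "F \<subseteq> {..<k + 1} \<times> {..<k + 1}" using that(1) unfolding grid_def by auto
    show "\<not> contains_pattern F (realizer_pattern \<pi>s P)"
      using that(2) strong_subposet_if_contains_realizer_pattern[OF po R] by blast
  qed
  then show ?thesis by blast
qed

section \<open>Saturated families\<close>

lemma ex_strong_saturated:
  assumes "finite Q" and "P \<noteq> {}"
  shows "\<exists>F. strong_saturated Q P le F"
proof -
  define free where "free = {F. F \<subseteq> Q \<and> \<not> strong_subposet P le F}"
  have "{} \<in> free"
    using assms(2) unfolding free_def strong_subposet_def by auto
  moreover have "finite free"
    using assms(1) unfolding free_def by simp
  ultimately obtain F where F: "F \<in> free" and maximal: "\<And>G. G \<in> free \<Longrightarrow> F \<subseteq> G \<Longrightarrow> F = G"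
    using finite_has_maximal[of free] by blast
  have "strong_subposet P le (insert x F)" if "x \<in> Q - F" for x
    using F maximal[of "insert x F"] that unfolding free_def by blast
  with F show ?thesis
    unfolding strong_saturated_def free_def by blast
qed

lemma sat_star_attained:
  assumes "P \<noteq> {}"
  shows "\<exists>F. strong_saturated (grid k) P le F \<and> card F = sat_star k P le"
proof -
  have "finite (grid k)" unfolding grid_def by simp
  then obtain F where "strong_saturated (grid k) P le F"
    using ex_strong_saturated[OF _ assms] by blast
  then have "\<exists>n F. strong_saturated (grid k) P le F \<and> card F = n" by blast
  then show ?thesis
    unfolding sat_star_def by (rule LeastI_ex)
qed

lemma sat_star_le_card:
  assumes "strong_saturated (grid k) P le F"
  shows "sat_star k P le \<le> card F"
  unfolding sat_star_def using assms by (intro Least_le) blast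

lemma sat_star_le_linear:
  assumes "finite_poset P le" and "is_realizer P le 2 \<pi>s" and "P \<noteq> {}"
  shows "\<exists>C. \<forall>k. sat_star k P le \<le> C * (k + 1)"
proof -
  obtain C where C: "\<And>k F. F \<subseteq> grid k \<Longrightarrow> \<not> strong_subposet P le F \<Longrightarrow> card F \<le> C * (k + 1)"
    using card_le_linear_if_not_strong_subposet[OF assms(1,2)] by blast
  have "sat_star k P le \<le> C * (k + 1)" for k
  proof -
    obtain F where "strong_saturated (grid k) P le F" "card F = sat_star k P le"
      using sat_star_attained[OF assms(3)] by blast
    then show ?thesis
      using C unfolding strong_saturated_def by metis
  qed
  then show ?thesis by blast
qed

section \<open>Stretching a saturated family\<close>

lemma grid_le_refl: "grid_le x x"
  unfolding grid_le_def by simp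

lemma grid_le_antisym: "grid_le x y \<Longrightarrow> grid_le y x \<Longrightarrow> x = y"
  unfolding grid_le_def by (simp add: prod_eq_iff)

lemma strong_subposet_order_embedding:
  assumes "strong_subposet P le G" and "g ` G \<subseteq> H"
    and emb: "\<And>x y. x \<in> G \<Longrightarrow> y \<in> G \<Longrightarrow> grid_le (g x) (g y) \<longleftrightarrow> grid_le x y"
  shows "strong_subposet P le H"
proof -
  obtain f where f: "inj_on f P" "f ` P \<subseteq> G" and le_iff: "\<forall>p\<in>P. \<forall>q\<in>P. le p q \<longleftrightarrow> grid_le (f p) (f q)"
    using assms(1) unfolding strong_subposet_def by blast
  show ?thesis
    unfolding strong_subposet_def
  proof (intro exI[of _ "g \<circ> f"] conjI ballI)
    show "inj_on (g \<circ> f) P"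
    proof (rule inj_onI)
      fix p q assume pq: "p \<in> P" "q \<in> P" and "(g \<circ> f) p = (g \<circ> f) q"
      then have "grid_le (f p) (f q)" "grid_le (f q) (f p)"
        using emb[of "f p" "f q"] emb[of "f q" "f p"] f(2) grid_le_refl by auto
      then show "p = q"
        using grid_le_antisym inj_onD[OF f(1) _ pq] by blast
    qed
    show "(g \<circ> f) ` P \<subseteq> H" using f(2) assms(2) by auto
    fix p q assume "p \<in> P" "q \<in> P"
    then show "le p q \<longleftrightarrow> grid_le ((g \<circ> f) p) ((g \<circ> f) q)"
      using le_iff emb[of "f p" "f q"] f(2) by (simp add: image_subset_iff)
  qed
qed

text \<open>\<open>\<Phi>\<close> and \<open>K\<close> form a Galois connection between \<open>F\<^sub>0\<close> and \<open>Q\<close>, so a point \<open>x \<in> Q\<close> relates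
  to \<open>\<Phi> ` F\<^sub>0\<close> exactly as \<open>K x\<close> relates to \<open>F\<^sub>0\<close>.\<close>
lemma strong_saturated_transfer:
  assumes sat: "strong_saturated Q0 P le F0"
    and \<Phi>_into: "\<Phi> ` F0 \<subseteq> Q" and K_into: "K ` Q \<subseteq> Q0"
    and upper: "\<And>y x. y \<in> F0 \<Longrightarrow> grid_le (\<Phi> y) x \<longleftrightarrow> grid_le y (K x)"
    and lower: "\<And>y x. y \<in> F0 \<Longrightarrow> grid_le x (\<Phi> y) \<longleftrightarrow> grid_le (K x) y"
  shows "strong_saturated Q P le (\<Phi> ` F0)" and "card (\<Phi> ` F0) = card F0"
proof -
  have F0: "F0 \<subseteq> Q0" "\<not> strong_subposet P le F0"
    and saturated: "\<And>x. x \<in> Q0 - F0 \<Longrightarrow> strong_subposet P le (insert x F0)"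
    using sat unfolding strong_saturated_def by auto
  have K_\<Phi>: "K (\<Phi> y) = y" if "y \<in> F0" for y
    using upper[OF that, of "\<Phi> y"] lower[OF that, of "\<Phi> y"] grid_le_refl grid_le_antisym by blast
  have \<Phi>_le: "grid_le (\<Phi> y) (\<Phi> y') \<longleftrightarrow> grid_le y y'" if "y \<in> F0" "y' \<in> F0" for y y'
    using upper[OF that(1), of "\<Phi> y'"] K_\<Phi>[OF that(2)] by simp
  have "inj_on \<Phi> F0"
    using K_\<Phi> by (rule inj_on_inverseI)
  then show "card (\<Phi> ` F0) = card F0"
    by (rule card_image)
  have "\<not> strong_subposet P le (\<Phi> ` F0)"
  proof
    assume "strong_subposet P le (\<Phi> ` F0)"
    moreover have "K ` \<Phi> ` F0 \<subseteq> F0" using K_\<Phi> by auto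
    ultimately have "strong_subposet P le F0"
      by (rule strong_subposet_order_embedding) (auto simp: K_\<Phi> \<Phi>_le)
    with F0(2) show False ..
  qed
  moreover have "strong_subposet P le (insert x (\<Phi> ` F0))" if x: "x \<in> Q - \<Phi> ` F0" for x
  proof -
    have "K x \<notin> F0"
    proof
      assume "K x \<in> F0"
      then have "x = \<Phi> (K x)"
        using upper[of "K x" x] lower[of "K x" x] grid_le_refl grid_le_antisym by blast
      with x \<open>K x \<in> F0\<close> show False by blast
    qed
    with x K_into have sub: "strong_subposet P le (insert (K x) F0)"
      using saturated by blast
    define h where "h z = (if z = K x then x else \<Phi> z)" for z
    have "h ` insert (K x) F0 \<subseteq> insert x (\<Phi> ` F0)"
      unfolding h_def by auto
    moreover have "grid_le (h z) (h w) \<longleftrightarrow> grid_le z w"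
      if "z \<in> insert (K x) F0" "w \<in> insert (K x) F0" for z w
      using that \<open>K x \<notin> F0\<close>
      by (cases "z = K x"; cases "w = K x") (auto simp: h_def upper lower K_\<Phi> grid_le_refl)
    ultimately show ?thesis
      by (rule strong_subposet_order_embedding[OF sub])
  qed
  ultimately show "strong_saturated Q P le (\<Phi> ` F0)"
    using \<Phi>_into unfolding strong_saturated_def by blast
qed

text \<open>\<open>stretch a s\<close> blows an empty line \<open>a\<close> up into the empty lines \<open>a, \<dots>, a + s\<close>, and
  \<open>squash a s\<close> collapses them back onto \<open>a\<close>.\<close>
definition stretch :: "nat \<Rightarrow> nat \<Rightarrow> nat \<Rightarrow> nat" where
  "stretch a s r = (if r < a then r else r + s)"

definition squash :: "nat \<Rightarrow> nat \<Rightarrow> nat \<Rightarrow> nat" where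
  "squash a s r = (if r < a then r else if r \<le> a + s then a else r - s)"

lemma stretch_le_iff: "r0 \<noteq> a \<Longrightarrow> stretch a s r0 \<le> r \<longleftrightarrow> r0 \<le> squash a s r"
  unfolding stretch_def squash_def by auto

lemma le_stretch_iff: "r0 \<noteq> a \<Longrightarrow> r \<le> stretch a s r0 \<longleftrightarrow> squash a s r \<le> r0"
  unfolding stretch_def squash_def by auto

lemma strong_saturated_stretch:
  assumes sat: "strong_saturated (grid k) P le F"
    and a: "a \<in> {1..k}" "a \<notin> fst ` F" and b: "b \<in> {1..k}" "b \<notin> snd ` F" and "k \<le> m"
  shows "\<exists>F'. strong_saturated (grid m) P le F' \<and> card F' = card F"
proof -
  define s where "s = m - k"
  define \<Phi> where "\<Phi> = map_prod (stretch a s) (stretch b s)"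
  define K where "K = map_prod (squash a s) (squash b s)"
  have "F \<subseteq> grid k" using sat unfolding strong_saturated_def by blast
  have off_lines: "fst y \<noteq> a" "snd y \<noteq> b" if "y \<in> F" for y
    using a(2) b(2) that by force+
  have \<Phi>_into: "\<Phi> ` F \<subseteq> grid m"
    using \<open>F \<subseteq> grid k\<close> \<open>k \<le> m\<close>
    unfolding \<Phi>_def grid_def s_def stretch_def by (fastforce simp: mem_Times_iff)
  have K_into: "K ` grid m \<subseteq> grid k"
    using a(1) b(1) \<open>k \<le> m\<close>
    unfolding K_def grid_def s_def squash_def by (fastforce simp: mem_Times_iff)
  have galois: "grid_le (\<Phi> y) x \<longleftrightarrow> grid_le y (K x)" "grid_le x (\<Phi> y) \<longleftrightarrow> grid_le (K x) y"
    if "y \<in> F" for y x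
    using off_lines[OF that]
    by (simp_all add: \<Phi>_def K_def grid_le_def stretch_le_iff le_stretch_iff)
  show ?thesis
    using strong_saturated_transfer[OF sat \<Phi>_into K_into galois] by blast
qed

lemma sat_star_le_if_sat_star_less:
  assumes "P \<noteq> {}" and "sat_star k P le < k" and "k \<le> m"
  shows "sat_star m P le \<le> sat_star k P le"
proof -
  obtain F where sat: "strong_saturated (grid k) P le F" and card_F: "card F = sat_star k P le"
    using sat_star_attained[OF assms(1)] by blast
  then have "finite F"
    unfolding strong_saturated_def grid_def by (auto intro: finite_subset)
  have "\<not> {1..k} \<subseteq> f ` F" for f :: "nat \<times> nat \<Rightarrow> nat"
  proof
    assume "{1..k} \<subseteq> f ` F"
    then have "k \<le> card (f ` F)"
      using card_mono[OF finite_imageI[OF \<open>finite F\<close>]] by fastforce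
    also have "\<dots> \<le> card F" by (rule card_image_le[OF \<open>finite F\<close>])
    finally show False using card_F assms(2) by simp
  qed
  then obtain a b where "a \<in> {1..k}" "a \<notin> fst ` F" "b \<in> {1..k}" "b \<notin> snd ` F"
    by blast
  then obtain F' where "strong_saturated (grid m) P le F'" "card F' = card F"
    using strong_saturated_stretch[OF sat _ _ _ _ assms(3)] by blast
  then show ?thesis
    using sat_star_le_card card_F by metis
qed

section \<open>The dichotomy\<close>

lemma bigo_one_if_eventually_le:
  fixes f :: "nat \<Rightarrow> nat"
  assumes "eventually (\<lambda>k. f k \<le> c) at_top"
  shows "(\<lambda>k. real (f k)) \<in> O(\<lambda>_. 1)"
  by (rule bigoI[where c = "real c"]) (use assms in \<open>auto elim: eventually_mono\<close>)

lemma bigtheta_if_linear_bounds: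
  fixes f :: "nat \<Rightarrow> nat"
  assumes lower: "\<And>k. k \<le> f k" and upper: "\<And>k. f k \<le> C * (k + 1)"
  shows "(\<lambda>k. real (f k)) \<in> \<Theta>(\<lambda>k. real k)"
proof (rule bigthetaI')
  show "eventually (\<lambda>k. 1 * norm (real k) \<le> norm (real (f k))
      \<and> norm (real (f k)) \<le> real (2 * C + 1) * norm (real k)) at_top"
    using eventually_ge_at_top[of "1::nat"]
  proof eventually_elim
    case (elim k)
    then have "C \<le> C * k" by simp
    moreover have "C * (k + 1) = C * k + C" "(2 * C + 1) * k = 2 * (C * k) + k"
      by (simp_all add: algebra_simps)
    ultimately have "C * (k + 1) \<le> (2 * C + 1) * k" by linarith
    then have "f k \<le> (2 * C + 1) * k"
      using upper[of k] by linarith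
    then have "real (f k) \<le> real (2 * C + 1) * real k"
      by (metis of_nat_le_iff of_nat_mult)
    then show ?case using lower[of k] by simp
  qed
qed simp_all

theorem theorem1p8:
  fixes P :: "'a set" and le :: "'a \<Rightarrow> 'a \<Rightarrow> bool"
  assumes "finite_poset P le" and "poset_dim P le = 2"
  shows "(\<lambda>k. real (sat_star k P le)) \<in> O(\<lambda>_. 1)
       \<or> (\<lambda>k. real (sat_star k P le)) \<in> \<Theta>(\<lambda>k. real k)"
proof -
  have "P \<noteq> {}"
    using assms(2) poset_dim_empty[of le] by auto
  obtain \<pi>s where "is_realizer P le 2 \<pi>s"
    using poset_dim_realizer[OF assms(1)] assms(2) by auto
  then obtain C where upper: "\<And>k. sat_star k P le \<le> C * (k + 1)"
    using sat_star_le_linear[OF assms(1) _ \<open>P \<noteq> {}\<close>] by blast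
  show ?thesis
  proof (cases "\<exists>k0. sat_star k0 P le < k0")
    case True
    then obtain k0 where "sat_star k0 P le < k0" by blast
    have "eventually (\<lambda>k. sat_star k P le \<le> sat_star k0 P le) at_top"
      using eventually_ge_at_top[of k0]
      by (rule eventually_mono) (rule sat_star_le_if_sat_star_less[OF \<open>P \<noteq> {}\<close> \<open>sat_star k0 P le < k0\<close>])
    then have "(\<lambda>k. real (sat_star k P le)) \<in> O(\<lambda>_. 1)"
      by (rule bigo_one_if_eventually_le)
    then show ?thesis ..
  next
    case False
    then have "k \<le> sat_star k P le" for k
      by (simp add: not_less)
    then have "(\<lambda>k. real (sat_star k P le)) \<in> \<Theta>(\<lambda>k. real k)"
      by (rule bigtheta_if_linear_bounds[OF _ upper])
    then show ?thesis ..
  qed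
qed

end
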